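(* Let $G$ be a digraph and $f$ a discrete Morse function on $G$. If $v_0v_1\cdots v_nv_0$ ($n\ge1$) is a directed loop in $G$, then $f(v_i)>0$ for every $0\le i\le n$.
   Context: A digraph $G=(V,E)$ consists of a set $V$ and $E\subseteq(V\times V)\setminus\{(v,v)\}$; $(u,v)\in E$ is written $u\to v$. An allowed elementary $n$-path is a sequence $v_0\cdots v_n$ of vertices with $v_{i-1}\to v_i\in E$ for $1\le i\le n$. A directed loop is an allowed elementary path of the form $v_0v_1\cdots v_nv_0$ with $n\ge1$. A map $f:V\to[0,+\infty)$ is a discrete Morse function on $G$ if for every allowed elementary path $v_0\cdots v_n$: (i) there is at most one index $0\le i\le n$ with $f(v_i)=0$ such that $v_0\cdots v_{i-1}v_{i+1}\cdots v_n$ is an allowed elementary $(n-1)$-path; (ii) there is at most one vertex $u$ with $f(u)=0$ such that for some $-1\le j\le n$ the sequence $v_0\cdots v_juv_{j+1}\cdots v_n$ (meaning $uv_0\cdots v_n$ if $j=-1$, $v_0\cdots v_nu$ if $j=n$) is an allowed elementary $(n+1)$-path. *)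

theory Defs
  imports Complex_Main
begin

definition digraph :: "'a set \<Rightarrow> ('a \<times> 'a) set \<Rightarrow> bool" where
  "digraph V E \<longleftrightarrow> E \<subseteq> (V \<times> V) - {(v,v) | v. True}"

(* An allowed elementary n-path v_0 ... v_n is represented by the list [v_0,...,v_n]
   (length n+1, n >= 0) of vertices with v_{i-1} -> v_i in E. *)
definition allowed_path :: "'a set \<Rightarrow> ('a \<times> 'a) set \<Rightarrow> 'a list \<Rightarrow> bool" where
  "allowed_path V E vs \<longleftrightarrow> vs \<noteq> [] \<and> set vs \<subseteq> V \<and>
     (\<forall>i. Suc i < length vs \<longrightarrow> (vs ! i, vs ! Suc i) \<in> E)"

definition directed_loop :: "'a set \<Rightarrow> ('a \<times> 'a) set \<Rightarrow> 'a list \<Rightarrow> bool" where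
  "directed_loop V E vs \<longleftrightarrow> length vs \<ge> 2 \<and> allowed_path V E (vs @ [hd vs])"

definition discrete_morse :: "'a set \<Rightarrow> ('a \<times> 'a) set \<Rightarrow> ('a \<Rightarrow> real) \<Rightarrow> bool" where
  "discrete_morse V E f \<longleftrightarrow>
     (\<forall>v\<in>V. f v \<ge> 0) \<and>
     (\<forall>vs. allowed_path V E vs \<longrightarrow>
        \<comment> \<open>(i) at most one index i with f(v_i)=0 whose deletion is allowed\<close>
        (\<forall>i j. i < length vs \<and> f (vs ! i) = 0 \<and> allowed_path V E (take i vs @ drop (Suc i) vs) \<and>
               j < length vs \<and> f (vs ! j) = 0 \<and> allowed_path V E (take j vs @ drop (Suc j) vs)
               \<longrightarrow> i = j) \<and>
        \<comment> \<open>(ii) at most one vertex u with f(u)=0 whose insertion (at any position) is allowed\<close>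
        (\<forall>u w. u \<in> V \<and> f u = 0 \<and> (\<exists>k \<le> length vs. allowed_path V E (take k vs @ u # drop k vs)) \<and>
               w \<in> V \<and> f w = 0 \<and> (\<exists>k \<le> length vs. allowed_path V E (take k vs @ w # drop k vs))
               \<longrightarrow> u = w))"

end

theory Submission
  imports Defs
begin

(* If f vanished at a vertex of a directed loop, rotate the loop to start there and close it
   up: in the resulting allowed path w_0 ... w_n w_0 both the first and the last vertex have
   f = 0, and deleting either one leaves an allowed path, contradicting condition (i). *)

lemma allowed_path_iff_successively:
  "allowed_path V E vs \<longleftrightarrow> vs \<noteq> [] \<and> set vs \<subseteq> V \<and> successively (\<lambda>x y. (x, y) \<in> E) vs"
  unfolding allowed_path_def successively_conv_nth by blast

lemma allowed_path_take:
  assumes "allowed_path V E vs" and "0 < n"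
  shows "allowed_path V E (take n vs)"
  using assms successively_append_iff[of "\<lambda>x y. (x, y) \<in> E" "take n vs" "drop n vs"]
  by (auto simp: allowed_path_iff_successively dest: in_set_takeD)

lemma allowed_path_drop:
  assumes "allowed_path V E vs" and "n < length vs"
  shows "allowed_path V E (drop n vs)"
  using assms successively_append_iff[of "\<lambda>x y. (x, y) \<in> E" "take n vs" "drop n vs"]
  by (auto simp: allowed_path_iff_successively dest: in_set_dropD)

lemma directed_loop_rotate1:
  assumes "directed_loop V E vs"
  shows "directed_loop V E (rotate1 vs)"
proof -
  obtain x y ys where vs: "vs = x # y # ys"
    using assms unfolding directed_loop_def by (metis Suc_le_length_iff numeral_2_eq_2)
  have "allowed_path V E (x # (y # ys @ [x]))"
    using assms vs by (simp add: directed_loop_def)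
  then have "allowed_path V E ((y # ys @ [x]) @ [y])"
    using successively_append_iff[of "\<lambda>x y. (x, y) \<in> E" "y # ys @ [x]" "[y]"]
    by (auto simp: allowed_path_iff_successively)
  then show ?thesis
    by (simp add: vs directed_loop_def)
qed

lemma directed_loop_rotate:
  "directed_loop V E vs \<Longrightarrow> directed_loop V E (rotate n vs)"
  by (induction n) (simp_all add: directed_loop_rotate1)

lemma discrete_morse_hd_loop_pos:
  assumes morse: "discrete_morse V E f" and loop: "directed_loop V E ws"
  shows "f (hd ws) > 0"
proof -
  define m where "m = length ws"
  define P where "P = ws @ [hd ws]"
  have "m \<ge> 2" and "ws \<noteq> []" and P: "allowed_path V E P"
    using loop by (auto simp: directed_loop_def m_def P_def)
  have "hd ws \<in> V"
    using P by (simp add: P_def allowed_path_def)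
  then have "f (hd ws) \<ge> 0"
    using morse by (simp add: discrete_morse_def)
  moreover have "f (hd ws) \<noteq> 0"
  proof
    assume zero: "f (hd ws) = 0"
    have "P ! 0 = hd ws" and "P ! m = hd ws" and "length P = Suc m"
      using \<open>m \<ge> 2\<close> by (auto simp: P_def m_def nth_append hd_conv_nth)
    moreover have "allowed_path V E (take 0 P @ drop (Suc 0) P)"
      using P allowed_path_drop[of V E P 1] \<open>ws \<noteq> []\<close> by (simp add: P_def)
    moreover have "allowed_path V E (take m P @ drop (Suc m) P)"
      using P allowed_path_take[of V E P m] \<open>ws \<noteq> []\<close> by (simp add: P_def m_def)
    ultimately have "0 = m"
      using morse P zero unfolding discrete_morse_def by (metis lessI zero_less_Suc)
    with \<open>m \<ge> 2\<close> show False by simp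
  qed
  ultimately show ?thesis by simp
qed

theorem lemma4p1:
  fixes V :: "'a set" and E :: "('a \<times> 'a) set" and f :: "'a \<Rightarrow> real" and vs :: "'a list"
  assumes "digraph V E" and "discrete_morse V E f" and "directed_loop V E vs"
  shows "\<forall>i < length vs. f (vs ! i) > 0"
proof (intro allI impI)
  fix i
  assume "i < length vs"
  moreover from this have "vs \<noteq> []" by auto
  ultimately have "hd (rotate i vs) = vs ! i"
    by (simp add: hd_rotate_conv_nth)
  moreover have "f (hd (rotate i vs)) > 0"
    using assms(2,3) by (intro discrete_morse_hd_loop_pos directed_loop_rotate)
  ultimately show "f (vs ! i) > 0" by simp
qed

end
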